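(* Let $A\in\mathbb{R}^{n\times n}$, ${\mathbf w}\in\mathbb{R}^n$, $T>0$, and let $D$ be a linear differential operator in the time variable $t$ (for instance $\frac{\mathrm d}{\mathrm dt}$ or $\frac{\mathrm d^2}{\mathrm dt^2}$), acting componentwise on vector-valued functions. Let $\mathcal{V}_1\subseteq\dots\subseteq\mathcal{V}_m\subseteq\mathcal{V}_{m+1}\subseteq\mathbb{R}^n$ be nested subspaces with $d_i=\dim(\mathcal{V}_i)$ ($d_0=0$), such that ${\mathbf w}\in\mathcal{V}_1$ and $A\mathcal{V}_i\subseteq\mathcal{V}_{i+1}$ for all $i=1,\dots,m$. Let $\langle\cdot,\cdot\rangle_\ast$ be an inner product on $\mathcal{V}_{m+1}$ with induced norm $\|\cdot\|_\ast$, and let $U_{m+1}=[\mathcal{U}_1,\dots,\mathcal{U}_{m+1}]$, $\mathcal{U}_j\in\mathbb{R}^{n\times b_j}$, $b_j=d_j-d_{j-1}$, be a nested $\langle\cdot,\cdot\rangle_\ast$-orthonormal basis of $\mathcal{V}_{m+1}$, i.e. $U_i=[\mathcal{U}_1,\dots,\mathcal{U}_i]$ is a $\langle\cdot,\cdot\rangle_\ast$-orthonormal basis of $\mathcal{V}_i$ for each $i\le m+1$. Let ${\mathbf y}_m:[0,T]\to\mathcal{V}_m$ be a (sufficiently differentiable) function whose residual ${\mathbf r}_m(t):=-D{\mathbf y}_m(t)-A{\mathbf y}_m(t)+{\mathbf w}$ satisfies $\langle{\mathbf v},{\mathbf r}_m(t)\rangle_\ast=0$ for all ${\mathbf v}\in\mathcal{V}_m$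 and all $t\in[0,T]$, and write ${\mathbf y}_m(t)=U_m{\mathbf x}_m(t)$ with ${\mathbf x}_m:[0,T]\to\mathbb{R}^{d_m}$. Define $\boldsymbol{\beta}_m(t) = -\,\mathcal{U}_{m+1}^\ast A\,\mathcal{U}_m\,[{\mathbf x}_m(t)]_{d_{m-1}+1:d_m}$. Then for all $t\in[0,T]$, \[ \|{\mathbf r}_m(t)\|_\ast = \|\boldsymbol{\beta}_m(t)\|, \] where $\|\cdot\|$ is the Euclidean norm.
   Context: For a matrix $W=[{\mathbf w}_1,\dots,{\mathbf w}_k]$ with columns in $\mathcal{V}_{m+1}$, $W^\ast$ denotes the adjoint with respect to $\langle\cdot,\cdot\rangle_\ast$: it maps ${\mathbf x}\in\mathcal{V}_{m+1}$ to $(\langle{\mathbf w}_1,{\mathbf x}\rangle_\ast,\dots,\langle{\mathbf w}_k,{\mathbf x}\rangle_\ast)^{\top}$; so $\mathcal{U}_{m+1}^\ast A\,\mathcal{U}_m$ is the $b_{m+1}\times b_m$ matrix with entries $\langle{\mathbf u},A{\mathbf u}'\rangle_\ast$ for columns ${\mathbf u}$ of $\mathcal{U}_{m+1}$ and ${\mathbf u}'$ of $\mathcal{U}_m$. For a vector ${\mathbf v}$, $[{\mathbf v}]_{i:j}$ denotes the subvector of entries $i,\dots,j$. *)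

theory Defs
  imports "HOL-Analysis.Analysis"
begin

definition inner_product_on :: "('a::real_vector) set \<Rightarrow> ('a \<Rightarrow> 'a \<Rightarrow> real) \<Rightarrow> bool" where
  "inner_product_on V ip \<longleftrightarrow>
     (\<forall>x\<in>V. \<forall>y\<in>V. ip x y = ip y x) \<and>
     (\<forall>x\<in>V. \<forall>y\<in>V. \<forall>z\<in>V. ip (x + y) z = ip x z + ip y z) \<and>
     (\<forall>x\<in>V. \<forall>z\<in>V. \<forall>a::real. ip (a *\<^sub>R x) z = a * ip x z) \<and>
     (\<forall>x\<in>V. x \<noteq> 0 \<longrightarrow> ip x x > 0)"

fun hder :: "real \<Rightarrow> nat \<Rightarrow> (real \<Rightarrow> 'a::real_normed_vector) \<Rightarrow> real \<Rightarrow> 'a" where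
  "hder T 0 f = f"
| "hder T (Suc k) f = (\<lambda>t. vector_derivative (hder T k f) (at t within {0..T}))"

definition diffop :: "real \<Rightarrow> nat \<Rightarrow> (nat \<Rightarrow> real \<Rightarrow> real) \<Rightarrow> (real \<Rightarrow> 'a::real_normed_vector) \<Rightarrow> real \<Rightarrow> 'a" where
  "diffop T K c f t = (\<Sum>k\<le>K. c k t *\<^sub>R hder T k f t)"

end

theory Submission
  imports Defs
begin

text \<open>Derivatives of a curve in a subspace stay in that subspace, so D y(t) lies in V m and the
  residual r(t) lies in V (m+1). By Parseval, the squared norm of r(t) is the sum of the squares
  of its coefficients in the orthonormal basis, and Galerkin orthogonality kills the coefficients
  along V m. The remaining basis vectors (the last block) are orthogonal to V m, which contains
  D y(t), w and A V (m-1); hence only the last block of coordinates of y(t) contributes, through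
  -A, and these coefficients form the vector beta(t).\<close>

lemma vector_derivative_in_subspace:
  fixes f :: "real \<Rightarrow> 'a::euclidean_space"
  assumes S: "subspace S" and f_in: "\<And>s. s \<in> X \<Longrightarrow> f s \<in> S"
    and dif: "f differentiable (at t within X)" and t: "t \<in> X"
    and nontriv: "at t within X \<noteq> bot"
  shows "vector_derivative f (at t within X) \<in> S"
proof -
  define f' where "f' = vector_derivative f (at t within X)"
  have D: "(f has_vector_derivative f') (at t within X)"
    using dif vector_derivative_works f'_def by blast
  obtain p q where p: "p \<in> span S" and q: "\<And>v. v \<in> span S \<Longrightarrow> orthogonal q v"
    and pq: "f' = p + q"
    using orthogonal_subspace_decomp_exists by blast
  \<comment> \<open>The component of f orthogonal to S is constantly zero, so its derivative q \<bullet> f' vanishes.\<close>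
  have D1: "((\<lambda>s. q \<bullet> f s) has_vector_derivative q \<bullet> f') (at t within X)"
    using bounded_linear.has_vector_derivative[OF bounded_linear_inner_right D] .
  have D2: "((\<lambda>s. q \<bullet> f s) has_vector_derivative 0) (at t within X)"
  proof (rule has_vector_derivative_transform_within[where d=1 and f="\<lambda>_. 0"])
    fix s assume "s \<in> X"
    then show "0 = q \<bullet> f s" using f_in q span_base orthogonal_def by metis
  qed (use t in auto)
  have "q \<bullet> f' = 0" using vector_derivative_unique_within[OF nontriv D1 D2] .
  moreover have "q \<bullet> p = 0" using q[OF p] orthogonal_def by auto
  ultimately have "q = 0" using pq by (simp add: inner_add_right)
  then show ?thesis using pq p S f'_def by (metis add.right_neutral span_eq_iff)
qed

lemma hder_in_subspace:
  fixes f :: "real \<Rightarrow> 'a::euclidean_space"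
  assumes S: "subspace S" and T: "T > 0" and f_in: "\<forall>s\<in>{0..T}. f s \<in> S"
    and smooth: "\<forall>k<K. \<forall>s\<in>{0..T}. hder T k f differentiable (at s within {0..T})"
    and "k \<le> K" and s: "s \<in> {0..T}"
  shows "hder T k f s \<in> S"
  using \<open>k \<le> K\<close> s
proof (induction k arbitrary: s)
  case 0
  then show ?case using f_in by simp
next
  case (Suc k)
  have "at s within {0..T} \<noteq> bot"
    using T Suc.prems(2) by (simp add: trivial_limit_within)
  then show ?case
    using vector_derivative_in_subspace[OF S _ _ Suc.prems(2)] Suc smooth by simp
qed

lemma diffop_in_subspace:
  fixes f :: "real \<Rightarrow> 'a::euclidean_space"
  assumes S: "subspace S" and T: "T > 0" and f_in: "\<forall>s\<in>{0..T}. f s \<in> S"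
    and smooth: "\<forall>k<K. \<forall>s\<in>{0..T}. hder T k f differentiable (at s within {0..T})"
    and t: "t \<in> {0..T}"
  shows "diffop T K c f t \<in> S"
  unfolding diffop_def
  using hder_in_subspace[OF S T f_in smooth _ t]
  by (auto intro!: subspace_sum[OF S] subspace_scale[OF S])

locale inner_product_subspace =
  fixes V :: "'a::real_vector set" and ip :: "'a \<Rightarrow> 'a \<Rightarrow> real"
  assumes inner_product: "inner_product_on V ip" and subspace: "subspace V"
begin

lemma ip_sym: "x \<in> V \<Longrightarrow> y \<in> V \<Longrightarrow> ip x y = ip y x"
  using inner_product[unfolded inner_product_on_def, THEN conjunct1] by blast

lemma ip_add_right:
  assumes "z \<in> V" "x \<in> V" "y \<in> V" shows "ip z (x + y) = ip z x + ip z y"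
proof -
  have "x + y \<in> V" using assms subspace_add[OF subspace] by blast
  moreover have "ip (x + y) z = ip x z + ip y z"
    using inner_product[unfolded inner_product_on_def, THEN conjunct2, THEN conjunct1] assms
    by blast
  ultimately show ?thesis
    using ip_sym[OF assms(1)] assms(2,3) by simp
qed

lemma ip_scaleR_right:
  assumes "z \<in> V" "x \<in> V" shows "ip z (a *\<^sub>R x) = a * ip z x"
proof -
  have "a *\<^sub>R x \<in> V" using assms subspace_scale[OF subspace] by blast
  moreover have "ip (a *\<^sub>R x) z = a * ip x z"
    using inner_product[unfolded inner_product_on_def, THEN conjunct2, THEN conjunct2, THEN conjunct1]
      assms by blast
  ultimately show ?thesis
    using ip_sym[OF assms(1)] assms(2) by simp
qed

lemma ip_zero_right: "z \<in> V \<Longrightarrow> ip z 0 = 0"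
  using ip_scaleR_right[of z 0 0] subspace_0[OF subspace] by simp

lemma ip_diff_right:
  assumes "z \<in> V" "x \<in> V" "y \<in> V" shows "ip z (x - y) = ip z x - ip z y"
  using ip_add_right[of z x "- y"] ip_scaleR_right[of z y "-1"] assms subspace_neg[OF subspace, of y]
  by simp

lemma ip_sum_right:
  assumes "z \<in> V" and "finite I" and "\<forall>i\<in>I. f i \<in> V"
  shows "ip z (\<Sum>i\<in>I. f i) = (\<Sum>i\<in>I. ip z (f i))"
  using assms(2,3)
proof (induction I rule: finite_induct)
  case empty
  then show ?case using ip_zero_right[OF assms(1)] by simp
next
  case (insert i I)
  have "sum f I \<in> V" using insert.prems by (intro subspace_sum[OF subspace]) auto
  then show ?case using insert ip_add_right[OF assms(1)] by simp
qed

lemma ip_orthogonal_span: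
  assumes "z \<in> V" and "S \<subseteq> V" and "\<forall>s\<in>S. ip z s = 0" and "v \<in> span S"
  shows "ip z v = 0"
proof -
  have "v \<in> V \<and> ip z v = 0"
    using \<open>v \<in> span S\<close>
  proof (induction rule: span_induct_alt)
    case base
    then show ?case using subspace_0[OF subspace] ip_zero_right[OF assms(1)] by simp
  next
    case (step a s v)
    then have "s \<in> V" "a *\<^sub>R s \<in> V" using assms(2) subspace_scale[OF subspace] by auto
    then show ?case
      using step assms(1,3) ip_add_right ip_scaleR_right subspace_add[OF subspace] by simp
  qed
  then show ?thesis ..
qed

lemma orthonormal_expansion:
  fixes u :: "nat \<Rightarrow> 'a" and N :: nat
  assumes u_in: "u ` {..<N} \<subseteq> V"
    and orthonormal: "\<And>j k. j < N \<Longrightarrow> k < N \<Longrightarrow> ip (u j) (u k) = (if j = k then 1 else 0)"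
    and r: "r \<in> span (u ` {..<N})"
  shows "r = (\<Sum>j<N. ip (u j) r *\<^sub>R u j)"
proof -
  have "r \<in> V \<and> r = (\<Sum>j<N. ip (u j) r *\<^sub>R u j)"
    using r
  proof (induction rule: span_induct_alt)
    case base
    have "ip (u j) 0 = 0" if "j < N" for j using that u_in ip_zero_right by auto
    then show ?case using subspace_0[OF subspace] by simp
  next
    case (step a s v)
    then obtain i where i: "i < N" "s = u i" by auto
    have ui: "u i \<in> V" "a *\<^sub>R u i \<in> V" using i u_in subspace_scale[OF subspace] by auto
    have vV: "v \<in> V" and v_eq: "v = (\<Sum>j<N. ip (u j) v *\<^sub>R u j)" using step.IH by blast+
    have "(\<Sum>j<N. ip (u j) (a *\<^sub>R s + v) *\<^sub>R u j)
        = (\<Sum>j<N. (if j = i then a *\<^sub>R u j else 0) + ip (u j) v *\<^sub>R u j)"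
    proof (rule sum.cong)
      fix j assume j: "j \<in> {..<N}"
      then have "ip (u j) (a *\<^sub>R s + v) = a * ip (u j) (u i) + ip (u j) v"
        using u_in i ui vV ip_add_right ip_scaleR_right by auto
      then show "ip (u j) (a *\<^sub>R s + v) *\<^sub>R u j
               = (if j = i then a *\<^sub>R u j else 0) + ip (u j) v *\<^sub>R u j"
        using orthonormal[of j i] i j by (simp add: scaleR_add_left)
    qed simp
    also have "\<dots> = a *\<^sub>R s + v"
      using i v_eq[symmetric] by (simp add: sum.distrib)
    finally show ?case using ui i vV subspace_add[OF subspace] by simp
  qed
  then show ?thesis ..
qed

lemma parseval:
  fixes u :: "nat \<Rightarrow> 'a" and N :: nat
  assumes u_in: "u ` {..<N} \<subseteq> V"
    and orthonormal: "\<And>j k. j < N \<Longrightarrow> k < N \<Longrightarrow> ip (u j) (u k) = (if j = k then 1 else 0)"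
    and r: "r \<in> span (u ` {..<N})"
  shows "ip r r = (\<Sum>j<N. (ip (u j) r)\<^sup>2)"
proof -
  have rV: "r \<in> V" using r span_minimal[OF u_in subspace] by blast
  have "ip r r = ip r (\<Sum>j<N. ip (u j) r *\<^sub>R u j)"
    using orthonormal_expansion[OF u_in orthonormal r] by (rule arg_cong)
  also have "\<dots> = (\<Sum>j<N. ip r (ip (u j) r *\<^sub>R u j))"
    by (rule ip_sum_right[OF rV]) (use u_in subspace_scale[OF subspace] in auto)
  also have "\<dots> = (\<Sum>j<N. ip (u j) r * ip r (u j))"
    using ip_scaleR_right[OF rV] u_in by (auto intro!: sum.cong)
  also have "\<dots> = (\<Sum>j<N. (ip (u j) r)\<^sup>2)"
    using ip_sym[OF rV] u_in by (auto simp: power2_eq_square intro!: sum.cong)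
  finally show ?thesis .
qed

lemma ip_orthogonal_tail:
  fixes g :: "nat \<Rightarrow> 'a" and M M' :: nat
  assumes z: "z \<in> V" and W: "subspace W" "W \<subseteq> V" and orth: "\<forall>v\<in>W. ip z v = 0"
    and v: "v \<in> W" and g_in: "\<forall>k<M. g k \<in> V" and g_low: "\<forall>k<M'. g k \<in> W" and "M' \<le> M"
  shows "ip z (v - (\<Sum>k<M. a k *\<^sub>R g k)) = - (\<Sum>k\<in>{M'..<M}. ip z (g k) * a k)"
proof -
  define low where "low = (\<Sum>k<M'. a k *\<^sub>R g k)"
  define high where "high = (\<Sum>k\<in>{M'..<M}. a k *\<^sub>R g k)"
  have "(\<Sum>k<M. a k *\<^sub>R g k) = low + high"
    unfolding low_def high_def lessThan_atLeast0
    using sum.atLeastLessThan_concat[of 0 M' M "\<lambda>k. a k *\<^sub>R g k"] \<open>M' \<le> M\<close> by simp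
  then have split: "v - (\<Sum>k<M. a k *\<^sub>R g k) = (v - low) - high" by simp
  have "low \<in> W"
    unfolding low_def using g_low by (auto intro!: subspace_sum[OF W(1)] subspace_scale[OF W(1)])
  then have v_low: "v - low \<in> W" using v subspace_diff[OF W(1)] by blast
  have high: "high \<in> V"
    unfolding high_def using g_in \<open>M' \<le> M\<close>
    by (auto intro!: subspace_sum[OF subspace] subspace_scale[OF subspace])
  have "ip z high = (\<Sum>k\<in>{M'..<M}. ip z (a k *\<^sub>R g k))"
    unfolding high_def
    by (rule ip_sum_right[OF z]) (use g_in subspace_scale[OF subspace] in auto)
  also have "\<dots> = (\<Sum>k\<in>{M'..<M}. ip z (g k) * a k)"
    using ip_scaleR_right[OF z] g_in by (auto simp: mult.commute intro!: sum.cong)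
  finally show ?thesis
    unfolding split using ip_diff_right[OF z] orth v_low high W(2) by auto
qed

lemma galerkin_residual_ip_self:
  fixes u g :: "nat \<Rightarrow> 'a" and M' M N :: nat
  assumes basis: "span (u ` {..<N}) = V"
    and orthonormal: "\<And>j k. j < N \<Longrightarrow> k < N \<Longrightarrow> ip (u j) (u k) = (if j = k then 1 else 0)"
    and "M' \<le> M" "M \<le> N"
    and r: "r = v - (\<Sum>k<M. a k *\<^sub>R g k)" and galerkin: "\<forall>k<M. ip (u k) r = 0"
    and v: "v \<in> span (u ` {..<M})" and g_in: "\<forall>k<M. g k \<in> V"
    and g_low: "\<forall>k<M'. g k \<in> span (u ` {..<M})"
  shows "ip r r = (\<Sum>j\<in>{M..<N}. (\<Sum>k\<in>{M'..<M}. ip (u j) (g k) * a k)\<^sup>2)"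
proof -
  have u_in: "u ` {..<N} \<subseteq> V" using span_superset[of "u ` {..<N}"] unfolding basis .
  have W_sub: "span (u ` {..<M}) \<subseteq> V"
    unfolding basis[symmetric] by (rule span_mono) (use \<open>M \<le> N\<close> in auto)
  have "r \<in> V"
    unfolding r using v W_sub g_in
    by (auto intro!: subspace_diff[OF subspace] subspace_sum[OF subspace] subspace_scale[OF subspace])
  then have "ip r r = (\<Sum>j<N. (ip (u j) r)\<^sup>2)"
    using parseval[OF u_in orthonormal] basis by simp
  also have "\<dots> = (\<Sum>j\<in>{M..<N}. (ip (u j) r)\<^sup>2)"
  proof -
    have "(\<Sum>j<M. (ip (u j) r)\<^sup>2) = 0" using galerkin by simp
    then show ?thesis
      using sum.atLeastLessThan_concat[of 0 M N "\<lambda>j. (ip (u j) r)\<^sup>2"] \<open>M \<le> N\<close>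
      by (simp add: lessThan_atLeast0)
  qed
  also have "\<dots> = (\<Sum>j\<in>{M..<N}. (\<Sum>k\<in>{M'..<M}. ip (u j) (g k) * a k)\<^sup>2)"
  proof (rule sum.cong)
    fix j assume j: "j \<in> {M..<N}"
    have "\<forall>s\<in>u ` {..<M}. ip (u j) s = 0" using j orthonormal \<open>M \<le> N\<close> by auto
    moreover have "u j \<in> V" "u ` {..<M} \<subseteq> V" using u_in j \<open>M \<le> N\<close> by auto
    ultimately have orth: "\<forall>w\<in>span (u ` {..<M}). ip (u j) w = 0"
      using ip_orthogonal_span by blast
    have "ip (u j) r = - (\<Sum>k\<in>{M'..<M}. ip (u j) (g k) * a k)"
      unfolding r using ip_orthogonal_tail[OF _ subspace_span W_sub orth v g_in g_low \<open>M' \<le> M\<close>]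
        u_in j by auto
    then show "(ip (u j) r)\<^sup>2 = (\<Sum>k\<in>{M'..<M}. ip (u j) (g k) * a k)\<^sup>2" by simp
  qed simp
  finally show ?thesis .
qed

end

theorem corollary3p2:
  fixes A :: "real^'n^'n" and w :: "real^'n" and T :: real
    and K :: nat and c :: "nat \<Rightarrow> real \<Rightarrow> real"
    and m :: nat and V :: "nat \<Rightarrow> (real^'n) set" and d :: "nat \<Rightarrow> nat"
    and ip :: "real^'n \<Rightarrow> real^'n \<Rightarrow> real"
    and u :: "nat \<Rightarrow> real^'n"
    and y :: "real \<Rightarrow> real^'n" and x :: "real \<Rightarrow> nat \<Rightarrow> real"
  assumes T_pos: "T > 0"
    and m_pos: "m \<ge> 1"
    and subsp: "\<forall>i\<in>{1..m+1}. subspace (V i)"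
    and nested: "\<forall>i\<in>{1..m}. V i \<subseteq> V (Suc i)"
    and d0: "d 0 = 0"
    and d_dim: "\<forall>i\<in>{1..m+1}. d i = dim (V i)"
    and w_in: "w \<in> V 1"
    and A_inv: "\<forall>i\<in>{1..m}. (\<lambda>v. A *v v) ` V i \<subseteq> V (Suc i)"
    and ip: "inner_product_on (V (m+1)) ip"
    and basis_in: "\<forall>i\<in>{1..m+1}. u ` {..<d i} \<subseteq> V i"
    and basis_span: "\<forall>i\<in>{1..m+1}. span (u ` {..<d i}) = V i"
    and orthonormal: "\<forall>j<d (m+1). \<forall>k<d (m+1). ip (u j) (u k) = (if j = k then 1 else 0)"
    and y_in: "\<forall>t\<in>{0..T}. y t \<in> V m"
    and y_smooth: "\<forall>k<K. \<forall>t\<in>{0..T}. hder T k y differentiable (at t within {0..T})"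
    and galerkin: "\<forall>t\<in>{0..T}. \<forall>v\<in>V m.
                     ip v (- diffop T K c y t - A *v y t + w) = 0"
    and y_coords: "\<forall>t\<in>{0..T}. y t = (\<Sum>k<d m. x t k *\<^sub>R u k)"
  shows "\<forall>t\<in>{0..T}.
           sqrt (ip (- diffop T K c y t - A *v y t + w) (- diffop T K c y t - A *v y t + w))
           = sqrt (\<Sum>j\<in>{d m..<d (m+1)}.
                     (- (\<Sum>k\<in>{d (m-1)..<d m}. ip (u j) (A *v u k) * x t k))\<^sup>2)"
proof
  fix t assume t: "t \<in> {0..T}"
  let ?N = "d (m+1)" and ?M = "d m" and ?M' = "d (m-1)"
  have m: "m \<in> {1..m}" "m \<in> {1..m+1}" "m+1 \<in> {1..m+1}" using m_pos by auto
  interpret inner_product_subspace "V (m+1)" ip using ip subsp m by unfold_locales auto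
  have Vm: "subspace (V m)" "V m \<subseteq> V (m+1)" "V m = span (u ` {..<?M})"
    using subsp nested basis_span m by auto
  have "V 1 \<subseteq> V m"
    by (rule lift_Suc_mono_le_ivl[of "{1..m}"]) (use nested m_pos in auto)
  then have w_Vm: "w \<in> V m" using w_in by blast
  have Dy: "diffop T K c y t \<in> V m"
    using diffop_in_subspace[OF Vm(1) T_pos] y_in y_smooth t by blast
  have MN: "?M \<le> ?N" using d_dim dim_subset[OF Vm(2)] m by simp
  have "?M' \<le> ?M \<and> (\<forall>k<?M'. A *v u k \<in> V m)"
  proof (cases "m = 1")
    case False
    then have m': "m-1 \<in> {1..m}" "m-1 \<in> {1..m+1}" "Suc (m-1) = m" using m_pos by auto
    have sub: "V (m-1) \<subseteq> V m" using bspec[OF nested m'(1)] m'(3) by simp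
    have "?M' \<le> ?M" using d_dim m'(2) m(2) dim_subset[OF sub] by simp
    moreover have "u k \<in> V (m-1)" if "k < ?M'" for k using bspec[OF basis_in m'(2)] that by auto
    ultimately show ?thesis using bspec[OF A_inv m'(1)] m'(3) by auto
  qed (use d0 in simp)
  then have M'M: "?M' \<le> ?M" and A_low: "\<forall>k<?M'. A *v u k \<in> V m" by blast+
  have A_high: "\<forall>k<?M. A *v u k \<in> V (m+1)"
    using bspec[OF A_inv m(1)] bspec[OF basis_in m(2)] by auto
  have "A *v y t = (\<Sum>k<?M. x t k *\<^sub>R (A *v u k))"
    using y_coords t
    by (simp add: linear_sum[OF matrix_vector_mul_linear] linear_scale[OF matrix_vector_mul_linear])
  then have r_eq: "- diffop T K c y t - A *v y t + w
                   = (w - diffop T K c y t) - (\<Sum>k<?M. x t k *\<^sub>R (A *v u k))"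
    by (simp add: algebra_simps)
  have "\<forall>k<?M. ip (u k) (- diffop T K c y t - A *v y t + w) = 0"
    using galerkin t bspec[OF basis_in m(2)] by auto
  then show "sqrt (ip (- diffop T K c y t - A *v y t + w) (- diffop T K c y t - A *v y t + w))
           = sqrt (\<Sum>j\<in>{?M..<?N}. (- (\<Sum>k\<in>{?M'..<?M}. ip (u j) (A *v u k) * x t k))\<^sup>2)"
    using galerkin_residual_ip_self[OF _ _ M'M MN r_eq] bspec[OF basis_span m(3)] orthonormal
      subspace_diff[OF Vm(1) w_Vm Dy] Vm(3) A_high A_low
    by simp
qed

end
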